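(* Let $n\ge3$, $B$ the closed unit disc, $X\in C^3(B,\mathbb R^n)$ a conformally parametrized immersion ($X_u\cdot X_u=W=X_v\cdot X_v$, $X_u\cdot X_v=0$) with a $C^2$ orthonormal normal section $\{N_1,\dots,N_{n-2}\}$, second fundamental forms $L_{\sigma,ij}=X_{u^iu^j}\cdot N_\sigma$, mean curvatures $H_\sigma=\frac{L_{\sigma,11}+L_{\sigma,22}}{2W}$ and torsion coefficients $T^\omega_{\sigma,i}$. Define the Hopf functions $\mathcal H_\sigma:=L_{\sigma,11}-L_{\sigma,22}-2iL_{\sigma,12}$. Then for all $\sigma=1,\dots,n-2$, $$\mathcal H_{\sigma,\overline w}=2H_{\sigma,w}W+\sum_{\omega=1}^{n-2}\Big\{(L_{\omega,22}+iL_{\omega,12})T^\sigma_{\omega,1}-(L_{\omega,21}+iL_{\omega,11})T^\sigma_{\omega,2}\Big\}.$$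
   Context: $w=u+iv$, $\Phi_w=\frac12(\Phi_u-i\Phi_v)$, $\Phi_{\overline w}=\frac12(\Phi_u+i\Phi_v)$. Orthonormal normal section: $N_\sigma\cdot X_{u^i}=0$, $N_\sigma\cdot N_\omega=\delta_{\sigma\omega}$ ($u^1=u,u^2=v$). Torsion coefficients: $T^\omega_{\sigma,i}=N_{\sigma,u^i}\cdot N_\omega$ for $\sigma\ne\omega$, $T^\sigma_{\sigma,i}=0$. *)

theory Defs
  imports "HOL-Analysis.Analysis"
begin

text \<open>Functions of the two real parameters (u,v) = (u^1,u^2); w = u + i v.\<close>

definition pu :: "(real \<times> real \<Rightarrow> 'a::real_normed_vector) \<Rightarrow> real \<times> real \<Rightarrow> 'a" where
  "pu f = (\<lambda>(u,v). vector_derivative (\<lambda>s. f (s,v)) (at u))"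

definition pv :: "(real \<times> real \<Rightarrow> 'a::real_normed_vector) \<Rightarrow> real \<times> real \<Rightarrow> 'a" where
  "pv f = (\<lambda>(u,v). vector_derivative (\<lambda>t. f (u,t)) (at v))"

definition pd :: "nat \<Rightarrow> (real \<times> real \<Rightarrow> 'a::real_normed_vector) \<Rightarrow> real \<times> real \<Rightarrow> 'a" where
  "pd i f = (if i = 1 then pu f else pv f)"

fun Ck :: "nat \<Rightarrow> (real \<times> real \<Rightarrow> 'a::real_normed_vector) \<Rightarrow> (real \<times> real) set \<Rightarrow> bool" where
  "Ck 0 f S = continuous_on S f"
| "Ck (Suc k) f S = (continuous_on S f \<and>
      (\<forall>p\<in>S. (\<lambda>s. f (s, snd p)) differentiable (at (fst p)) \<and>
              (\<lambda>t. f (fst p, t)) differentiable (at (snd p))) \<and>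
      Ck k (pu f) S \<and> Ck k (pv f) S)"

definition dw :: "(real \<times> real \<Rightarrow> complex) \<Rightarrow> real \<times> real \<Rightarrow> complex" where
  "dw f p = (pu f p - \<i> * pv f p) / 2"

definition dwbar :: "(real \<times> real \<Rightarrow> complex) \<Rightarrow> real \<times> real \<Rightarrow> complex" where
  "dwbar f p = (pu f p + \<i> * pv f p) / 2"

definition sff :: "(real \<times> real \<Rightarrow> real^'n) \<Rightarrow> (nat \<Rightarrow> real \<times> real \<Rightarrow> real^'n)
    \<Rightarrow> nat \<Rightarrow> nat \<Rightarrow> nat \<Rightarrow> real \<times> real \<Rightarrow> real" where
  "sff X N \<sigma> i j p = pd i (pd j X) p \<bullet> N \<sigma> p"

definition areaW :: "(real \<times> real \<Rightarrow> real^'n) \<Rightarrow> real \<times> real \<Rightarrow> real" where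
  "areaW X p = pu X p \<bullet> pu X p"

definition meanH :: "(real \<times> real \<Rightarrow> real^'n) \<Rightarrow> (nat \<Rightarrow> real \<times> real \<Rightarrow> real^'n)
    \<Rightarrow> nat \<Rightarrow> real \<times> real \<Rightarrow> real" where
  "meanH X N \<sigma> p = (sff X N \<sigma> 1 1 p + sff X N \<sigma> 2 2 p) / (2 * areaW X p)"

text \<open>torsion coefficients: torsion N \<sigma> \<omega> i p = T^\<omega>_{\<sigma>,i} = N_{\<sigma>,u^i} \<cdot> N_\<omega> (\<sigma> \<noteq> \<omega>), 0 if \<sigma> = \<omega>\<close>
definition torsion :: "(nat \<Rightarrow> real \<times> real \<Rightarrow> real^'n) \<Rightarrow> nat \<Rightarrow> nat \<Rightarrow> nat \<Rightarrow> real \<times> real \<Rightarrow> real" where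
  "torsion N \<sigma> \<omega> i p = (if \<sigma> = \<omega> then 0 else pd i (N \<sigma>) p \<bullet> N \<omega> p)"

definition hopf :: "(real \<times> real \<Rightarrow> real^'n) \<Rightarrow> (nat \<Rightarrow> real \<times> real \<Rightarrow> real^'n)
    \<Rightarrow> nat \<Rightarrow> real \<times> real \<Rightarrow> complex" where
  "hopf X N \<sigma> p = complex_of_real (sff X N \<sigma> 1 1 p - sff X N \<sigma> 2 2 p)
                    - 2 * \<i> * complex_of_real (sff X N \<sigma> 1 2 p)"

end

theory Submission
  imports Defs
begin

text \<open>
  Differentiating \<open>L_{\<sigma>,ij} = X_{ij} \<bullet> N_\<sigma>\<close> and using the symmetry of the third
  derivatives of \<open>X\<close> gives the Codazzi equations
  \<open>\<partial>_k L_{\<sigma>,ij} - \<partial>_j L_{\<sigma>,ik} = X_{ij} \<bullet> N_{\<sigma>,k} - X_{ik} \<bullet> N_{\<sigma>,j}\<close>.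
  Expanding the right-hand side in the orthogonal frame \<open>X_u, X_v, N_1, \<dots>, N_{n-2}\<close> turns
  the tangential part into second fundamental forms (Weingarten: \<open>N_{\<sigma>,k} \<bullet> X_l = -L_{\<sigma>,kl}\<close>)
  and the normal part into torsion coefficients. In conformal coordinates the Christoffel
  symbols are \<open>X_{ij} \<bullet> X_k = (\<delta>_{jk} W_i + \<delta>_{ik} W_j - \<delta>_{ij} W_k) / 2\<close>, and the Codazzi
  equations for \<open>(i,j,k) = (2,1,2)\<close> and \<open>(1,1,2)\<close> are then exactly the real and imaginary
  parts of the claimed formula.
\<close>

section \<open>Partial derivatives along coordinate lines\<close>

text \<open>Index \<open>1\<close> is the \<open>u\<close>-direction and every other index means \<open>v\<close>, as in \<^const>\<open>pd\<close>.\<close>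

definition coord :: "nat \<Rightarrow> real \<times> real \<Rightarrow> real" where
  "coord i q = (if i = 1 then fst q else snd q)"

definition coord_line :: "nat \<Rightarrow> real \<times> real \<Rightarrow> real \<Rightarrow> real \<times> real" where
  "coord_line i q t = (if i = 1 then (t, snd q) else (fst q, t))"

definition has_partial_derivative ::
    "nat \<Rightarrow> (real \<times> real \<Rightarrow> 'a::real_normed_vector) \<Rightarrow> 'a \<Rightarrow> real \<times> real \<Rightarrow> bool" where
  "has_partial_derivative i f D q \<longleftrightarrow>
     ((\<lambda>t. f (coord_line i q t)) has_vector_derivative D) (at (coord i q))"

lemma pu_pv_eq_pd: "pu f = pd 1 f" "pv f = pd 2 f"
  by (simp_all add: pd_def)

lemma pd_eq_vector_derivative:
  "pd i f q = vector_derivative (\<lambda>t. f (coord_line i q t)) (at (coord i q))"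
  by (cases q) (simp add: pd_def pu_def pv_def coord_def coord_line_def)

lemma pd_eqI: "has_partial_derivative i f D q \<Longrightarrow> pd i f q = D"
  by (simp add: has_partial_derivative_def pd_eq_vector_derivative vector_derivative_at)

lemma has_partial_derivative_pd:
  "has_partial_derivative i f D q \<Longrightarrow> has_partial_derivative i f (pd i f q) q"
  by (simp add: pd_eqI)

lemma Ck_has_partial_derivative:
  "Ck k f S \<Longrightarrow> 0 < k \<Longrightarrow> q \<in> S \<Longrightarrow> has_partial_derivative i f (pd i f q) q"
  by (cases q; cases k)
    (auto simp: has_partial_derivative_def pd_eq_vector_derivative coord_def coord_line_def
          vector_derivative_works[symmetric])

lemma Ck_pd: "Ck (Suc k) f S \<Longrightarrow> Ck k (pd i f) S"
  by (simp add: pd_def)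

lemma Ck_Suc_imp_Ck: "Ck (Suc k) f S \<Longrightarrow> Ck k f S"
proof (induction k arbitrary: f)
  case (Suc k)
  then have "Ck k (pu f) S" "Ck k (pv f) S"
    by (simp_all only: Ck.simps(2)[of "Suc k"])
  with Suc.prems show ?case
    by (simp only: Ck.simps(2)) blast
qed simp

lemma Ck_mono:
  assumes "k \<le> l"
  shows "Ck l f S \<Longrightarrow> Ck k f S"
  using assms by (induction l rule: dec_induct) (blast dest: Ck_Suc_imp_Ck)+

lemma has_partial_derivative_const: "has_partial_derivative i (\<lambda>x. c) 0 q"
  by (simp add: has_partial_derivative_def)

lemma has_partial_derivative_add:
  "has_partial_derivative i f D q \<Longrightarrow> has_partial_derivative i g E q \<Longrightarrow>
   has_partial_derivative i (\<lambda>x. f x + g x) (D + E) q"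
  unfolding has_partial_derivative_def by (rule has_vector_derivative_add)

lemma has_partial_derivative_diff:
  "has_partial_derivative i f D q \<Longrightarrow> has_partial_derivative i g E q \<Longrightarrow>
   has_partial_derivative i (\<lambda>x. f x - g x) (D - E) q"
  unfolding has_partial_derivative_def by (rule has_vector_derivative_diff)

lemma has_partial_derivative_mult_left:
  fixes f :: "real \<times> real \<Rightarrow> 'a::real_normed_algebra"
  shows "has_partial_derivative i f D q \<Longrightarrow> has_partial_derivative i (\<lambda>x. c * f x) (c * D) q"
  unfolding has_partial_derivative_def by (rule has_vector_derivative_mult_right)

lemma has_partial_derivative_inner:
  "has_partial_derivative i f D q \<Longrightarrow> has_partial_derivative i g E q \<Longrightarrow>
   has_partial_derivative i (\<lambda>x. f x \<bullet> g x) (D \<bullet> g q + f q \<bullet> E) q"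
  unfolding has_partial_derivative_def
  by (drule (1) bounded_bilinear.has_vector_derivative[OF bounded_bilinear_inner])
    (simp add: coord_def coord_line_def add.commute split: if_splits)

lemma has_partial_derivative_of_real:
  "has_partial_derivative i f (D::real) q \<Longrightarrow>
   has_partial_derivative i (\<lambda>x. complex_of_real (f x)) (of_real D) q"
  unfolding has_partial_derivative_def
  by (rule has_vector_derivative_of_real) (simp add: has_real_derivative_iff_has_vector_derivative)

lemma has_partial_derivative_divide:
  fixes f g :: "real \<times> real \<Rightarrow> real"
  assumes "has_partial_derivative i f D q" "has_partial_derivative i g E q" "g q \<noteq> 0"
  shows "has_partial_derivative i (\<lambda>x. f x / g x) ((D * g q - f q * E) / (g q * g q)) q"
proof -
  have q: "coord_line i q (coord i q) = q"
    by (simp add: coord_def coord_line_def)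
  have "((\<lambda>t. f (coord_line i q t) / g (coord_line i q t)) has_real_derivative
          (D * g (coord_line i q (coord i q)) - f (coord_line i q (coord i q)) * E) /
          (g (coord_line i q (coord i q)) * g (coord_line i q (coord i q)))) (at (coord i q))"
    using assms q
    by (intro DERIV_divide)
      (simp_all add: has_partial_derivative_def has_real_derivative_iff_has_vector_derivative)
  then show ?thesis
    by (simp add: q has_partial_derivative_def has_real_derivative_iff_has_vector_derivative)
qed

lemma continuous_on_coord_line: "continuous_on UNIV (coord_line i q)"
  by (cases "i = 1") (simp_all add: coord_line_def[abs_def] continuous_on_Pair)

lemma open_coord_line_preimage: "open S \<Longrightarrow> open (coord_line i q -` S)"
  by (rule open_vimage[OF _ continuous_on_coord_line])

lemma pd_cong:
  assumes "open S" "q \<in> S" "\<And>x. x \<in> S \<Longrightarrow> f x = g x"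
  shows "pd i f q = pd i g q"
proof -
  let ?T = "coord_line i q -` S"
  have T: "open ?T" "coord i q \<in> ?T"
    using assms(1,2) by (simp_all add: open_coord_line_preimage coord_def coord_line_def)
  have "((\<lambda>t. f (coord_line i q t)) has_vector_derivative D) (at (coord i q)) \<longleftrightarrow>
        ((\<lambda>t. g (coord_line i q t)) has_vector_derivative D) (at (coord i q))" for D
  proof
    assume "((\<lambda>t. f (coord_line i q t)) has_vector_derivative D) (at (coord i q))"
    then show "((\<lambda>t. g (coord_line i q t)) has_vector_derivative D) (at (coord i q))"
      by (rule has_vector_derivative_transform_within_open[OF _ T]) (simp add: assms(3))
  next
    assume "((\<lambda>t. g (coord_line i q t)) has_vector_derivative D) (at (coord i q))"
    then show "((\<lambda>t. f (coord_line i q t)) has_vector_derivative D) (at (coord i q))"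
      by (rule has_vector_derivative_transform_within_open[OF _ T]) (simp add: assms(3))
  qed
  then show ?thesis
    by (simp add: pd_eq_vector_derivative vector_derivative_def)
qed

lemma pd_const: "pd i (\<lambda>x. c) q = 0"
  by (rule pd_eqI[OF has_partial_derivative_const])

lemma pd_inner_eq_0_if_constant:
  assumes "open S" "q \<in> S" "\<And>x. x \<in> S \<Longrightarrow> f x \<bullet> g x = c"
    and "has_partial_derivative i f D q" "has_partial_derivative i g E q"
  shows "D \<bullet> g q + f q \<bullet> E = 0"
proof -
  have "D \<bullet> g q + f q \<bullet> E = pd i (\<lambda>x. f x \<bullet> g x) q"
    using pd_eqI[OF has_partial_derivative_inner[OF assms(4,5)]] by simp
  also have "\<dots> = pd i (\<lambda>x. c) q"
    using assms(1-3) by (rule pd_cong)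
  finally show ?thesis by (simp add: pd_const)
qed

section \<open>Symmetry of mixed partial derivatives\<close>

lemma has_partial_derivative_swap:
  "has_partial_derivative 1 (\<lambda>x. f (prod.swap x)) D q \<longleftrightarrow> has_partial_derivative 2 f D (prod.swap q)"
  "has_partial_derivative 2 (\<lambda>x. f (prod.swap x)) D q \<longleftrightarrow> has_partial_derivative 1 f D (prod.swap q)"
  by (cases q; simp add: has_partial_derivative_def coord_def coord_line_def)+

lemma second_difference_mean_value:
  fixes f fu fuv :: "real \<times> real \<Rightarrow> real"
  assumes "t > 0"
    and fu: "\<And>x. x \<in> {a..a+t} \<times> {b..b+t} \<Longrightarrow> has_partial_derivative 1 f (fu x) x"
    and fuv: "\<And>x. x \<in> {a..a+t} \<times> {b..b+t} \<Longrightarrow> has_partial_derivative 2 fu (fuv x) x"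
  obtains z w where "z \<in> {a<..<a+t}" "w \<in> {b<..<b+t}"
    "f (a+t, b+t) - f (a+t, b) - f (a, b+t) + f (a, b) = t\<^sup>2 * fuv (z, w)"
proof -
  have "\<exists>z. a < z \<and> z < a + t \<and>
      (f (a+t, b+t) - f (a+t, b)) - (f (a, b+t) - f (a, b)) = (a + t - a) * (fu (z, b+t) - fu (z, b))"
  proof (rule MVT2[where f = "\<lambda>s. f (s, b+t) - f (s, b)"])
    fix x assume "a \<le> x" "x \<le> a + t"
    then show "((\<lambda>s. f (s, b+t) - f (s, b)) has_real_derivative fu (x, b+t) - fu (x, b)) (at x)"
      using assms(1) fu[of "(x, b+t)"] fu[of "(x, b)"]
      by (auto simp: has_partial_derivative_def coord_def coord_line_def
          has_real_derivative_iff_has_vector_derivative intro!: has_vector_derivative_diff)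
  qed (use assms(1) in simp)
  then obtain z where z: "a < z" "z < a + t"
    "f (a+t, b+t) - f (a+t, b) - f (a, b+t) + f (a, b) = t * (fu (z, b+t) - fu (z, b))"
    by (auto simp: algebra_simps)
  have "\<exists>w. b < w \<and> w < b + t \<and> fu (z, b+t) - fu (z, b) = (b + t - b) * fuv (z, w)"
  proof (rule MVT2[where f = "\<lambda>r. fu (z, r)"])
    fix y assume "b \<le> y" "y \<le> b + t"
    then show "((\<lambda>r. fu (z, r)) has_real_derivative fuv (z, y)) (at y)"
      using fuv[of "(z, y)"] z
      by (simp add: has_partial_derivative_def coord_def coord_line_def
          has_real_derivative_iff_has_vector_derivative)
  qed (use assms(1) in simp)
  then obtain w where "b < w" "w < b + t" "fu (z, b+t) - fu (z, b) = t * fuv (z, w)"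
    by auto
  with z that show ?thesis
    by (simp add: power2_eq_square)
qed

lemma dist_corner_le:
  "(z, w) \<in> {a..a+t} \<times> {b..b+t} \<Longrightarrow> dist (z, w) (a::real, b::real) \<le> 2 * t"
  using sqrt_sum_squares_le_sum_abs[of "z - a" "w - b"]
  by (simp add: dist_Pair_Pair dist_real_def)

lemma eventually_square_subset:
  fixes a b :: real
  assumes "open S" "(a, b) \<in> S"
  shows "eventually (\<lambda>t. {a..a+t} \<times> {b..b+t} \<subseteq> S) (at_right 0)"
proof -
  obtain r where "r > 0" "ball (a, b) r \<subseteq> S"
    using assms open_contains_ball by blast
  moreover have "eventually (\<lambda>t. t < r / 2) (at_right 0)"
    using \<open>r > 0\<close> by (auto simp: eventually_at_right_field intro!: exI[of _ "r / 2"])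
  then show ?thesis
  proof (rule eventually_mono)
    fix t assume "t < r / 2"
    show "{a..a+t} \<times> {b..b+t} \<subseteq> S"
    proof
      fix x assume x: "x \<in> {a..a+t} \<times> {b..b+t}"
      then have "dist (a, b) x < r"
        using dist_corner_le[of "fst x" "snd x" a t b] \<open>t < r / 2\<close> by (simp add: dist_commute)
      then show "x \<in> S"
        using \<open>ball (a, b) r \<subseteq> S\<close> by auto
    qed
  qed
qed

lemma tendsto_at_right_of_square_values:
  fixes g :: "real \<times> real \<Rightarrow> 'a::metric_space"
  assumes "isCont g (a, b)"
    and "eventually (\<lambda>t. \<exists>z\<in>{a<..<a+t}. \<exists>w\<in>{b<..<b+t}. h t = g (z, w)) (at_right 0)"
  shows "(h \<longlongrightarrow> g (a, b)) (at_right 0)"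
proof (rule tendstoI)
  fix e :: real assume "e > 0"
  then obtain d where "d > 0" and d: "\<And>x. dist x (a, b) < d \<Longrightarrow> dist (g x) (g (a, b)) < e"
    using assms(1) unfolding continuous_at_eps_delta by blast
  have "eventually (\<lambda>t. t < d / 2) (at_right 0)"
    using \<open>d > 0\<close> by (auto simp: eventually_at_right_field intro!: exI[of _ "d / 2"])
  with assms(2) show "eventually (\<lambda>t. dist (h t) (g (a, b)) < e) (at_right 0)"
  proof eventually_elim
    case (elim t)
    then obtain z w where "z \<in> {a<..<a+t}" "w \<in> {b<..<b+t}" "h t = g (z, w)"
      by blast
    moreover from this have "dist (z, w) (a, b) < d"
      using dist_corner_le[of z w a t b] elim by simp
    ultimately show ?case
      using d by simp
  qed
qed

lemma second_difference_quotient_tendsto: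
  fixes f fu fuv :: "real \<times> real \<Rightarrow> real"
  assumes "open S" "(a, b) \<in> S"
    and fu: "\<And>x. x \<in> S \<Longrightarrow> has_partial_derivative 1 f (fu x) x"
    and fuv: "\<And>x. x \<in> S \<Longrightarrow> has_partial_derivative 2 fu (fuv x) x"
    and "isCont fuv (a, b)"
  shows "((\<lambda>t. (f (a+t, b+t) - f (a+t, b) - f (a, b+t) + f (a, b)) / t\<^sup>2) \<longlongrightarrow> fuv (a, b))
           (at_right 0)"
proof (rule tendsto_at_right_of_square_values[OF assms(5)])
  have "eventually (\<lambda>t. 0 < t \<and> {a..a+t} \<times> {b..b+t} \<subseteq> S) (at_right 0)"
    using eventually_square_subset[OF assms(1,2)] eventually_at_right_less[of 0]
    by (auto elim: eventually_conj)
  then show "eventually (\<lambda>t. \<exists>z\<in>{a<..<a+t}. \<exists>w\<in>{b<..<b+t}.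
      (f (a+t, b+t) - f (a+t, b) - f (a, b+t) + f (a, b)) / t\<^sup>2 = fuv (z, w)) (at_right 0)"
  proof eventually_elim
    case (elim t)
    then obtain z w where zw: "z \<in> {a<..<a+t}" "w \<in> {b<..<b+t}"
        "f (a+t, b+t) - f (a+t, b) - f (a, b+t) + f (a, b) = t\<^sup>2 * fuv (z, w)"
      using second_difference_mean_value[of t a b f fu fuv] fu fuv by blast
    then have "(f (a+t, b+t) - f (a+t, b) - f (a, b+t) + f (a, b)) / t\<^sup>2 = fuv (z, w)"
      using elim by simp
    with zw show ?case
      by blast
  qed
qed

lemma mixed_partials_eq_real:
  fixes f fu fv fuv fvu :: "real \<times> real \<Rightarrow> real"
  assumes "open S" "q \<in> S"
    and fu: "\<And>x. x \<in> S \<Longrightarrow> has_partial_derivative 1 f (fu x) x"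
    and fv: "\<And>x. x \<in> S \<Longrightarrow> has_partial_derivative 2 f (fv x) x"
    and fuv: "\<And>x. x \<in> S \<Longrightarrow> has_partial_derivative 2 fu (fuv x) x"
    and fvu: "\<And>x. x \<in> S \<Longrightarrow> has_partial_derivative 1 fv (fvu x) x"
    and "isCont fuv q" "isCont fvu q"
  shows "fuv q = fvu q"
proof -
  obtain a b where q: "q = (a, b)"
    by fastforce
  define D where "D t = (f (a+t, b+t) - f (a+t, b) - f (a, b+t) + f (a, b)) / t\<^sup>2" for t
  have "(D \<longlongrightarrow> fuv (a, b)) (at_right 0)"
    unfolding D_def using assms q by (intro second_difference_quotient_tendsto[OF assms(1)]) simp_all
  moreover have "(D \<longlongrightarrow> fvu (a, b)) (at_right 0)"
  proof -
    \<comment> \<open>the same quotient, read with the roles of \<open>u\<close> and \<open>v\<close> exchanged\<close>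
    have "((\<lambda>t. (f (prod.swap (b+t, a+t)) - f (prod.swap (b+t, a)) - f (prod.swap (b, a+t))
                 + f (prod.swap (b, a))) / t\<^sup>2) \<longlongrightarrow> fvu (prod.swap (b, a))) (at_right 0)"
    proof (rule second_difference_quotient_tendsto[where S = "prod.swap -` S"])
      show "open (prod.swap -` S)"
        by (rule open_vimage[OF assms(1) continuous_on_swap])
      show "isCont (\<lambda>x. fvu (prod.swap x)) (b, a)"
        using assms(8) q by (intro isCont_o2[OF isCont_swap]) simp
      show "has_partial_derivative 1 (\<lambda>x. f (prod.swap x)) (fv (prod.swap x)) x"
        if "x \<in> prod.swap -` S" for x
        unfolding has_partial_derivative_swap using fv[of "prod.swap x"] that by simp
      show "has_partial_derivative 2 (\<lambda>x. fv (prod.swap x)) (fvu (prod.swap x)) x"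
        if "x \<in> prod.swap -` S" for x
        unfolding has_partial_derivative_swap using fvu[of "prod.swap x"] that by simp
    qed (use assms(2) q in simp)
    then show ?thesis
      unfolding D_def by (simp add: algebra_simps)
  qed
  ultimately show ?thesis
    using tendsto_unique[OF trivial_limit_at_right_real] q by blast
qed

lemma pd_commute:
  fixes f :: "real \<times> real \<Rightarrow> 'a::real_inner"
  assumes "open S" "Ck 2 f S" "q \<in> S"
  shows "pd i (pd j f) q = pd j (pd i f) q"
proof -
  have C2: "Ck (Suc (Suc 0)) f S"
    using assms(2) by (simp add: numeral_2_eq_2)
  have mixed: "pd 2 (pd 1 f) q = pd 1 (pd 2 f) q"
  proof -
    define c where "c = pd 2 (pd 1 f) q - pd 1 (pd 2 f) q"
    have "pd 2 (pd 1 f) q \<bullet> c = pd 1 (pd 2 f) q \<bullet> c"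
    proof (rule mixed_partials_eq_real[OF assms(1,3)])
      fix x assume "x \<in> S"
      then have "has_partial_derivative k (\<lambda>x. g x \<bullet> c) (pd k g x \<bullet> c) x"
        if "Ck (Suc l) g S" for k l and g :: "real \<times> real \<Rightarrow> 'a"
        using has_partial_derivative_inner[OF Ck_has_partial_derivative[OF that zero_less_Suc]
            has_partial_derivative_const] by simp
      then show "has_partial_derivative 1 (\<lambda>x. f x \<bullet> c) (pd 1 f x \<bullet> c) x"
        "has_partial_derivative 2 (\<lambda>x. f x \<bullet> c) (pd 2 f x \<bullet> c) x"
        "has_partial_derivative 2 (\<lambda>x. pd 1 f x \<bullet> c) (pd 2 (pd 1 f) x \<bullet> c) x"
        "has_partial_derivative 1 (\<lambda>x. pd 2 f x \<bullet> c) (pd 1 (pd 2 f) x \<bullet> c) x"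
        using C2 Ck_pd[OF C2] by blast+
    next
      have "continuous_on S (pd 2 (pd 1 f))" "continuous_on S (pd 1 (pd 2 f))"
        using Ck_pd[OF Ck_pd[OF C2]] by simp_all
      then show "isCont (\<lambda>x. pd 2 (pd 1 f) x \<bullet> c) q" "isCont (\<lambda>x. pd 1 (pd 2 f) x \<bullet> c) q"
        using assms(1,3) by (auto simp: continuous_on_eq_continuous_at intro!: continuous_intros)
    qed
    then have "c \<bullet> c = 0"
      by (simp add: c_def inner_diff_left)
    then show ?thesis
      by (simp add: c_def)
  qed
  show ?thesis
    using mixed by (cases "i = 1"; cases "j = 1") (simp_all add: pd_def)
qed

lemma pd_pd_pd_commute:
  fixes f :: "real \<times> real \<Rightarrow> 'a::real_inner"
  assumes "open S" "Ck 3 f S" "q \<in> S"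
  shows "pd k (pd i (pd j f)) q = pd j (pd i (pd k f)) q"
proof -
  have C2: "Ck 2 (pd l f) S" "Ck 2 f S" for l
    using Ck_pd[of 2 f S l] Ck_mono[of 2 3] assms(2) by (simp_all add: numeral_3_eq_3)
  have "pd k (pd i (pd j f)) q = pd i (pd k (pd j f)) q"
    using pd_commute[OF assms(1) C2(1) assms(3)] .
  also have "\<dots> = pd i (pd j (pd k f)) q"
    using pd_commute[OF assms(1) C2(2)] by (intro pd_cong[OF assms(1,3)]) simp
  also have "\<dots> = pd j (pd i (pd k f)) q"
    using pd_commute[OF assms(1) C2(1) assms(3)] .
  finally show ?thesis .
qed

section \<open>Orthogonal frames and Christoffel symbols\<close>

lemma sum_1_2: "(\<Sum>l\<in>{1,2::nat}. f l) = f 1 + f 2"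
  by simp

lemma inner_eq_sum_orthogonal_basis:
  fixes b :: "'i \<Rightarrow> 'a::euclidean_space"
  assumes "finite I" "DIM('a) \<le> card I"
    and nonzero: "\<And>i. i \<in> I \<Longrightarrow> b i \<noteq> 0"
    and orth: "\<And>i j. i \<in> I \<Longrightarrow> j \<in> I \<Longrightarrow> i \<noteq> j \<Longrightarrow> b i \<bullet> b j = 0"
  shows "x \<bullet> y = (\<Sum>i\<in>I. (x \<bullet> b i) * (y \<bullet> b i) / (b i \<bullet> b i))"
proof -
  have "inj_on b I"
    by (rule inj_onI) (metis inner_eq_zero_iff nonzero orth)
  have indep: "independent (b ` I)"
    by (rule pairwise_orthogonal_independent)
      (use nonzero in \<open>auto simp: pairwise_def orthogonal_def intro!: orth\<close>)
  then have "card (b ` I) = dim (UNIV :: 'a set)"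
    using independent_bound[OF indep] card_image[OF \<open>inj_on b I\<close>] assms(2) by simp
  then have spanning: "x \<in> span (b ` I)" for x
    using card_eq_dim[of "b ` I" UNIV] indep \<open>finite I\<close> by auto
  define r where "r = x - (\<Sum>i\<in>I. (x \<bullet> b i / (b i \<bullet> b i)) *\<^sub>R b i)"
  have r_orth: "r \<bullet> b j = 0" if "j \<in> I" for j
  proof -
    have "(\<Sum>i\<in>I. x \<bullet> b i / (b i \<bullet> b i) * (b i \<bullet> b j)) = (\<Sum>i\<in>I. if i = j then x \<bullet> b j else 0)"
      using that nonzero orth by (intro sum.cong) auto
    then show ?thesis
      using that \<open>finite I\<close> by (simp add: r_def inner_diff_left inner_sum_left)
  qed
  have "orthogonal r r"
    by (rule orthogonal_to_span[OF spanning]) (auto simp: orthogonal_def r_orth)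
  then have "x = (\<Sum>i\<in>I. (x \<bullet> b i / (b i \<bullet> b i)) *\<^sub>R b i)"
    by (simp add: r_def orthogonal_def)
  then have "x \<bullet> y = (\<Sum>i\<in>I. (x \<bullet> b i / (b i \<bullet> b i)) * (b i \<bullet> y))"
    by (metis (no_types, lifting) inner_scaleR_left inner_sum_left sum.cong)
  then show ?thesis
    by (simp add: inner_commute)
qed

lemma christoffel_first_kind:
  fixes f :: "real \<times> real \<Rightarrow> 'a::real_inner"
  assumes "open S" "Ck 2 f S" "q \<in> S"
  shows "pd i (pd j f) q \<bullet> pd k f q =
    (pd i (\<lambda>x. pd j f x \<bullet> pd k f x) q + pd j (\<lambda>x. pd i f x \<bullet> pd k f x) q
      - pd k (\<lambda>x. pd i f x \<bullet> pd j f x) q) / 2"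
proof -
  have C1: "Ck 1 (pd l f) S" for l
    using Ck_pd[of 1 f S l] assms(2) by (simp add: numeral_2_eq_2)
  have metric: "pd a (\<lambda>x. pd b f x \<bullet> pd c f x) q = pd a (pd b f) q \<bullet> pd c f q + pd b f q \<bullet> pd a (pd c f) q"
    for a b c
    using assms(3) by (intro pd_eqI has_partial_derivative_inner Ck_has_partial_derivative[OF C1] zero_less_one)
  have "pd j (pd i f) q = pd i (pd j f) q" "pd k (pd i f) q = pd i (pd k f) q"
       "pd k (pd j f) q = pd j (pd k f) q"
    using pd_commute[OF assms] by blast+
  then show ?thesis
    unfolding metric by (simp add: inner_commute[of "pd i (pd k f) q"])
qed

section \<open>Conformal immersions with an orthonormal normal frame\<close>

locale conformal_frame =
  fixes X :: "real \<times> real \<Rightarrow> real^'n"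
    and N :: "nat \<Rightarrow> real \<times> real \<Rightarrow> real^'n"
    and S :: "(real \<times> real) set"
    and I :: "nat set"
  assumes open_domain: "open S"
    and X_C3: "Ck 3 X S"
    and conformal: "\<And>j k q. j \<in> {1,2} \<Longrightarrow> k \<in> {1,2} \<Longrightarrow> q \<in> S \<Longrightarrow>
                      pd j X q \<bullet> pd k X q = (if j = k then areaW X q else 0)"
    and area_pos: "\<And>q. q \<in> S \<Longrightarrow> areaW X q > 0"
    and finite_normals: "finite I"
    and normals_span: "CARD('n) \<le> card I + 2"
      \<comment> \<open>so that \<open>X\<^sub>u, X\<^sub>v\<close> and the \<open>N\<^sub>\<sigma>\<close> form an orthogonal basis\<close>
    and N_C1: "\<And>\<sigma>. \<sigma> \<in> I \<Longrightarrow> Ck 1 (N \<sigma>) S"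
    and N_normal: "\<And>\<sigma> j q. \<sigma> \<in> I \<Longrightarrow> j \<in> {1,2} \<Longrightarrow> q \<in> S \<Longrightarrow>
                      N \<sigma> q \<bullet> pd j X q = 0"
    and N_orthonormal: "\<And>\<sigma> \<omega> q. \<sigma> \<in> I \<Longrightarrow> \<omega> \<in> I \<Longrightarrow> q \<in> S \<Longrightarrow>
                      N \<sigma> q \<bullet> N \<omega> q = (if \<sigma> = \<omega> then 1 else 0)"
begin

lemma frame_expansion:
  assumes "q \<in> S"
  shows "Y \<bullet> Z = (\<Sum>l\<in>{1,2}. (Y \<bullet> pd l X q) * (Z \<bullet> pd l X q) / areaW X q)
                + (\<Sum>\<omega>\<in>I. (Y \<bullet> N \<omega> q) * (Z \<bullet> N \<omega> q))"
proof -
  define b where "b = case_sum (\<lambda>\<omega>. N \<omega> q) (\<lambda>l. pd l X q)"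
  have "Y \<bullet> Z = (\<Sum>i\<in>I <+> {1,2::nat}. (Y \<bullet> b i) * (Z \<bullet> b i) / (b i \<bullet> b i))"
  proof (rule inner_eq_sum_orthogonal_basis)
    show "finite (I <+> {1,2::nat})" "DIM(real^'n) \<le> card (I <+> {1,2::nat})"
      using finite_normals normals_span by (simp_all add: card_Plus)
    show "b i \<noteq> 0" if "i \<in> I <+> {1,2::nat}" for i
    proof (cases i)
      case (Inl \<omega>)
      with that have \<omega>: "\<omega> \<in> I"
        by auto
      show ?thesis
        using N_orthonormal[OF \<omega> \<omega> assms] by (auto simp: b_def Inl)
    next
      case (Inr l)
      with that have l: "l \<in> {1,2}"
        by auto
      show ?thesis
        using conformal[OF l l assms] area_pos[OF assms] by (auto simp: b_def Inr)
    qed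
    show "b i \<bullet> b j = 0" if "i \<in> I <+> {1,2::nat}" "j \<in> I <+> {1,2::nat}" "i \<noteq> j" for i j
      using that N_orthonormal[OF _ _ assms] conformal[OF _ _ assms] N_normal[OF _ _ assms]
      by (auto simp: b_def inner_commute split: if_splits)
  qed
  also have "\<dots> = (\<Sum>l\<in>{1,2}. (Y \<bullet> pd l X q) * (Z \<bullet> pd l X q) / areaW X q)
                + (\<Sum>\<omega>\<in>I. (Y \<bullet> N \<omega> q) * (Z \<bullet> N \<omega> q))"
    using finite_normals N_orthonormal[OF _ _ assms] conformal[OF _ _ assms]
    by (simp add: sum.Plus b_def)
  finally show ?thesis .
qed

lemma X_C2: "Ck 2 X S"
  using Ck_mono[of 2 3] X_C3 by simp

lemma pd_X_C2: "Ck 2 (pd j X) S"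
  using Ck_pd[OF X_C3[unfolded numeral_3_eq_3], folded numeral_2_eq_2] .

lemma pd_pd_X_C1: "Ck 1 (pd i (pd j X)) S"
  using Ck_pd[OF pd_X_C2[unfolded numeral_2_eq_2], folded One_nat_def] .

lemma N_has_partial_derivative:
  "\<sigma> \<in> I \<Longrightarrow> q \<in> S \<Longrightarrow> has_partial_derivative i (N \<sigma>) (pd i (N \<sigma>) q) q"
  using Ck_has_partial_derivative[OF N_C1 zero_less_one] .

lemma pd_X_has_partial_derivative:
  "q \<in> S \<Longrightarrow> has_partial_derivative i (pd j X) (pd i (pd j X) q) q"
  by (rule Ck_has_partial_derivative[OF pd_X_C2]) simp_all

lemma sff_has_partial_derivative_explicit:
  assumes "\<sigma> \<in> I" "q \<in> S"
  shows "has_partial_derivative k (sff X N \<sigma> i j)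
           (pd k (pd i (pd j X)) q \<bullet> N \<sigma> q + pd i (pd j X) q \<bullet> pd k (N \<sigma>) q) q"
proof -
  have "sff X N \<sigma> i j = (\<lambda>x. pd i (pd j X) x \<bullet> N \<sigma> x)"
    by (simp add: sff_def fun_eq_iff)
  then show ?thesis
    using assms
    by (simp only:) (intro has_partial_derivative_inner N_has_partial_derivative
        Ck_has_partial_derivative[OF pd_pd_X_C1 zero_less_one])
qed

lemma sff_has_partial_derivative:
  "\<sigma> \<in> I \<Longrightarrow> q \<in> S \<Longrightarrow> has_partial_derivative k (sff X N \<sigma> i j) (pd k (sff X N \<sigma> i j) q) q"
  by (rule has_partial_derivative_pd[OF sff_has_partial_derivative_explicit])

lemma pd_sff:
  "\<sigma> \<in> I \<Longrightarrow> q \<in> S \<Longrightarrow>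
   pd k (sff X N \<sigma> i j) q = pd k (pd i (pd j X)) q \<bullet> N \<sigma> q + pd i (pd j X) q \<bullet> pd k (N \<sigma>) q"
  by (rule pd_eqI[OF sff_has_partial_derivative_explicit])

lemma areaW_has_partial_derivative:
  assumes "q \<in> S"
  shows "has_partial_derivative k (areaW X) (pd k (areaW X) q) q"
proof -
  have "areaW X = (\<lambda>x. pd 1 X x \<bullet> pd 1 X x)"
    by (simp add: areaW_def pu_pv_eq_pd fun_eq_iff)
  moreover have "has_partial_derivative k (\<lambda>x. pd 1 X x \<bullet> pd 1 X x)
      (pd k (pd 1 X) q \<bullet> pd 1 X q + pd 1 X q \<bullet> pd k (pd 1 X) q) q"
    using assms by (intro has_partial_derivative_inner pd_X_has_partial_derivative)
  ultimately show ?thesis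
    by (simp only:) (rule has_partial_derivative_pd)
qed

lemma sff_sym: "q \<in> S \<Longrightarrow> sff X N \<sigma> 2 1 q = sff X N \<sigma> 1 2 q"
  using pd_commute[OF open_domain X_C2] by (simp add: sff_def)

lemma weingarten:
  assumes "\<sigma> \<in> I" "j \<in> {1,2}" "q \<in> S"
  shows "pd i (N \<sigma>) q \<bullet> pd j X q = - sff X N \<sigma> i j q"
proof -
  have "pd i (N \<sigma>) q \<bullet> pd j X q + N \<sigma> q \<bullet> pd i (pd j X) q = 0"
    using assms
    by (intro pd_inner_eq_0_if_constant[where i = i, OF open_domain assms(3) N_normal[OF assms(1,2)]]
        N_has_partial_derivative pd_X_has_partial_derivative)
  then show ?thesis
    by (simp add: sff_def inner_commute[of "N \<sigma> q"])
qed

lemma pd_normal_inner_antisym: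
  assumes "\<sigma> \<in> I" "\<omega> \<in> I" "q \<in> S"
  shows "pd i (N \<sigma>) q \<bullet> N \<omega> q = - (pd i (N \<omega>) q \<bullet> N \<sigma> q)"
proof -
  have "pd i (N \<sigma>) q \<bullet> N \<omega> q + N \<sigma> q \<bullet> pd i (N \<omega>) q = 0"
    using assms
    by (intro pd_inner_eq_0_if_constant[where i = i, OF open_domain assms(3) N_orthonormal[OF assms(1,2)]]
        N_has_partial_derivative)
  then show ?thesis
    by (simp add: inner_commute[of "N \<sigma> q"])
qed

lemma pd_normal_inner_normal:
  "\<sigma> \<in> I \<Longrightarrow> \<omega> \<in> I \<Longrightarrow> q \<in> S \<Longrightarrow> pd i (N \<sigma>) q \<bullet> N \<omega> q = torsion N \<sigma> \<omega> i q"
  using pd_normal_inner_antisym[of \<sigma> \<sigma> q i] by (cases "\<sigma> = \<omega>") (simp_all add: torsion_def)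

lemma torsion_antisym:
  "\<sigma> \<in> I \<Longrightarrow> \<omega> \<in> I \<Longrightarrow> q \<in> S \<Longrightarrow> torsion N \<omega> \<sigma> i q = - torsion N \<sigma> \<omega> i q"
  using pd_normal_inner_antisym[of \<sigma> \<omega> q i] by (simp add: torsion_def)

lemma christoffel_conformal:
  assumes "i \<in> {1,2}" "j \<in> {1,2}" "k \<in> {1,2}" "q \<in> S"
  shows "pd i (pd j X) q \<bullet> pd k X q =
    ((if j = k then pd i (areaW X) q else 0) + (if i = k then pd j (areaW X) q else 0)
      - (if i = j then pd k (areaW X) q else 0)) / 2"
proof -
  have "pd a (\<lambda>x. pd b X x \<bullet> pd c X x) q = (if b = c then pd a (areaW X) q else 0)"
    if "b \<in> {1,2}" "c \<in> {1,2}" for a b c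
  proof -
    have "pd a (\<lambda>x. pd b X x \<bullet> pd c X x) q = pd a (\<lambda>x. if b = c then areaW X x else 0) q"
      using conformal[OF that] by (intro pd_cong[OF open_domain assms(4)]) simp
    then show ?thesis
      by (simp add: pd_const)
  qed
  then show ?thesis
    using christoffel_first_kind[OF open_domain X_C2 assms(4), of i j k] assms(1-3) by simp
qed

lemma codazzi:
  assumes "\<sigma> \<in> I" "q \<in> S"
  shows "pd k (sff X N \<sigma> i j) q - pd j (sff X N \<sigma> i k) q =
           pd i (pd j X) q \<bullet> pd k (N \<sigma>) q - pd i (pd k X) q \<bullet> pd j (N \<sigma>) q"
  using pd_pd_pd_commute[OF open_domain X_C3 assms(2), of k i j] assms by (simp add: pd_sff)

lemma inner_pd_normal_expansion:
  assumes "\<sigma> \<in> I" "q \<in> S"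
  shows "pd i (pd j X) q \<bullet> pd k (N \<sigma>) q =
           (\<Sum>l\<in>{1,2}. - (pd i (pd j X) q \<bullet> pd l X q) * sff X N \<sigma> k l q / areaW X q)
           + (\<Sum>\<omega>\<in>I. sff X N \<omega> i j q * torsion N \<sigma> \<omega> k q)"
proof -
  have "(\<Sum>\<omega>\<in>I. (pd i (pd j X) q \<bullet> N \<omega> q) * (pd k (N \<sigma>) q \<bullet> N \<omega> q))
        = (\<Sum>\<omega>\<in>I. sff X N \<omega> i j q * torsion N \<sigma> \<omega> k q)"
    using assms by (intro sum.cong) (simp_all add: sff_def pd_normal_inner_normal)
  then show ?thesis
    using assms by (subst frame_expansion[OF assms(2)]) (simp add: weingarten)
qed

lemma codazzi_frame:
  assumes "\<sigma> \<in> I" "q \<in> S"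
  shows "pd k (sff X N \<sigma> i j) q - pd j (sff X N \<sigma> i k) q =
           (\<Sum>l\<in>{1,2}. ((pd i (pd k X) q \<bullet> pd l X q) * sff X N \<sigma> j l q
                          - (pd i (pd j X) q \<bullet> pd l X q) * sff X N \<sigma> k l q) / areaW X q)
           + (\<Sum>\<omega>\<in>I. sff X N \<omega> i j q * torsion N \<sigma> \<omega> k q - sff X N \<omega> i k q * torsion N \<sigma> \<omega> j q)"
  unfolding codazzi[OF assms] inner_pd_normal_expansion[OF assms] sum_subtractf
  by (simp add: diff_divide_distrib)

lemma codazzi_conformal_1:
  assumes "\<sigma> \<in> I" "q \<in> S"
  shows "pd 2 (sff X N \<sigma> 1 2) q - pd 1 (sff X N \<sigma> 2 2) q =
           - (sff X N \<sigma> 1 1 q + sff X N \<sigma> 2 2 q) * pd 1 (areaW X) q / (2 * areaW X q)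
           + (\<Sum>\<omega>\<in>I. sff X N \<omega> 2 2 q * torsion N \<omega> \<sigma> 1 q - sff X N \<omega> 2 1 q * torsion N \<omega> \<sigma> 2 q)"
proof -
  have "pd 2 (sff X N \<sigma> 1 2) q = pd 2 (sff X N \<sigma> 2 1) q"
    using sff_sym by (intro pd_cong[OF open_domain assms(2)]) simp
  moreover have "(\<Sum>l\<in>{1,2}. ((pd 2 (pd 2 X) q \<bullet> pd l X q) * sff X N \<sigma> 1 l q
                          - (pd 2 (pd 1 X) q \<bullet> pd l X q) * sff X N \<sigma> 2 l q) / areaW X q)
      = - (sff X N \<sigma> 1 1 q + sff X N \<sigma> 2 2 q) * pd 1 (areaW X) q / (2 * areaW X q)"
  proof -
    have G: "pd 2 (pd 2 X) q \<bullet> pd 1 X q = - pd 1 (areaW X) q / 2"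
         "pd 2 (pd 2 X) q \<bullet> pd 2 X q = pd 2 (areaW X) q / 2"
         "pd 2 (pd 1 X) q \<bullet> pd 1 X q = pd 2 (areaW X) q / 2"
         "pd 2 (pd 1 X) q \<bullet> pd 2 X q = pd 1 (areaW X) q / 2"
      by (simp_all add: christoffel_conformal assms(2))
    show ?thesis
      using area_pos[OF assms(2)] by (simp only: sum_1_2 G sff_sym[OF assms(2)]) (simp add: field_simps)
  qed
  moreover have "(\<Sum>\<omega>\<in>I. sff X N \<omega> 2 1 q * torsion N \<sigma> \<omega> 2 q - sff X N \<omega> 2 2 q * torsion N \<sigma> \<omega> 1 q)
      = (\<Sum>\<omega>\<in>I. sff X N \<omega> 2 2 q * torsion N \<omega> \<sigma> 1 q - sff X N \<omega> 2 1 q * torsion N \<omega> \<sigma> 2 q)"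
    by (intro sum.cong) (simp_all add: torsion_antisym[OF assms(1) _ assms(2)])
  ultimately show ?thesis
    using codazzi_frame[OF assms, where i = 2 and j = 1 and k = 2] by simp
qed

lemma codazzi_conformal_2:
  assumes "\<sigma> \<in> I" "q \<in> S"
  shows "pd 2 (sff X N \<sigma> 1 1) q - pd 1 (sff X N \<sigma> 1 2) q =
           (sff X N \<sigma> 1 1 q + sff X N \<sigma> 2 2 q) * pd 2 (areaW X) q / (2 * areaW X q)
           + (\<Sum>\<omega>\<in>I. sff X N \<omega> 1 2 q * torsion N \<omega> \<sigma> 1 q - sff X N \<omega> 1 1 q * torsion N \<omega> \<sigma> 2 q)"
proof -
  have "(\<Sum>l\<in>{1,2}. ((pd 1 (pd 2 X) q \<bullet> pd l X q) * sff X N \<sigma> 1 l q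
                          - (pd 1 (pd 1 X) q \<bullet> pd l X q) * sff X N \<sigma> 2 l q) / areaW X q)
      = (sff X N \<sigma> 1 1 q + sff X N \<sigma> 2 2 q) * pd 2 (areaW X) q / (2 * areaW X q)"
  proof -
    have G: "pd 1 (pd 2 X) q \<bullet> pd 1 X q = pd 2 (areaW X) q / 2"
         "pd 1 (pd 2 X) q \<bullet> pd 2 X q = pd 1 (areaW X) q / 2"
         "pd 1 (pd 1 X) q \<bullet> pd 1 X q = pd 1 (areaW X) q / 2"
         "pd 1 (pd 1 X) q \<bullet> pd 2 X q = - pd 2 (areaW X) q / 2"
      by (simp_all add: christoffel_conformal assms(2))
    show ?thesis
      using area_pos[OF assms(2)] by (simp only: sum_1_2 G sff_sym[OF assms(2)]) (simp add: field_simps)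
  qed
  moreover have "(\<Sum>\<omega>\<in>I. sff X N \<omega> 1 1 q * torsion N \<sigma> \<omega> 2 q - sff X N \<omega> 1 2 q * torsion N \<sigma> \<omega> 1 q)
      = (\<Sum>\<omega>\<in>I. sff X N \<omega> 1 2 q * torsion N \<omega> \<sigma> 1 q - sff X N \<omega> 1 1 q * torsion N \<omega> \<sigma> 2 q)"
    by (intro sum.cong) (simp_all add: torsion_antisym[OF assms(1) _ assms(2)])
  ultimately show ?thesis
    using codazzi_frame[OF assms, where i = 1 and j = 1 and k = 2] by simp
qed

lemma meanH_has_partial_derivative:
  assumes "\<sigma> \<in> I" "q \<in> S"
  shows "has_partial_derivative k (meanH X N \<sigma>)
           (((pd k (sff X N \<sigma> 1 1) q + pd k (sff X N \<sigma> 2 2) q) * areaW X q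
             - (sff X N \<sigma> 1 1 q + sff X N \<sigma> 2 2 q) * pd k (areaW X) q) / (2 * (areaW X q)\<^sup>2)) q"
proof -
  have "meanH X N \<sigma> = (\<lambda>x. (sff X N \<sigma> 1 1 x + sff X N \<sigma> 2 2 x) / (2 * areaW X x))"
    by (simp add: meanH_def fun_eq_iff)
  moreover have "has_partial_derivative k (\<lambda>x. (sff X N \<sigma> 1 1 x + sff X N \<sigma> 2 2 x) / (2 * areaW X x))
      (((pd k (sff X N \<sigma> 1 1) q + pd k (sff X N \<sigma> 2 2) q) * (2 * areaW X q)
        - (sff X N \<sigma> 1 1 q + sff X N \<sigma> 2 2 q) * (2 * pd k (areaW X) q))
       / ((2 * areaW X q) * (2 * areaW X q))) q"
    using assms area_pos[OF assms(2)]
    by (intro has_partial_derivative_divide has_partial_derivative_add has_partial_derivative_mult_left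
        sff_has_partial_derivative areaW_has_partial_derivative) simp_all
  moreover have "((pd k (sff X N \<sigma> 1 1) q + pd k (sff X N \<sigma> 2 2) q) * (2 * areaW X q)
        - (sff X N \<sigma> 1 1 q + sff X N \<sigma> 2 2 q) * (2 * pd k (areaW X) q))
       / ((2 * areaW X q) * (2 * areaW X q))
      = ((pd k (sff X N \<sigma> 1 1) q + pd k (sff X N \<sigma> 2 2) q) * areaW X q
         - (sff X N \<sigma> 1 1 q + sff X N \<sigma> 2 2 q) * pd k (areaW X) q) / (2 * (areaW X q)\<^sup>2)"
    using area_pos[OF assms(2)] by (simp add: field_simps power2_eq_square)
  ultimately show ?thesis
    by simp
qed

lemma pd_hopf:
  assumes "\<sigma> \<in> I" "q \<in> S"
  shows "pd k (hopf X N \<sigma>) q = complex_of_real (pd k (sff X N \<sigma> 1 1) q - pd k (sff X N \<sigma> 2 2) q)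
                                 - 2 * \<i> * complex_of_real (pd k (sff X N \<sigma> 1 2) q)"
proof -
  have "hopf X N \<sigma> = (\<lambda>x. complex_of_real (sff X N \<sigma> 1 1 x - sff X N \<sigma> 2 2 x)
                                 - 2 * \<i> * complex_of_real (sff X N \<sigma> 1 2 x))"
    by (simp add: hopf_def fun_eq_iff)
  then show ?thesis
    using assms
    by (simp only:) (intro pd_eqI has_partial_derivative_diff has_partial_derivative_of_real
        has_partial_derivative_mult_left sff_has_partial_derivative)
qed

lemma dwbar_hopf:
  assumes "\<sigma> \<in> I" "q \<in> S"
  shows "dwbar (hopf X N \<sigma>) q =
           2 * dw (\<lambda>x. complex_of_real (meanH X N \<sigma> x)) q * complex_of_real (areaW X q)
         + (\<Sum>\<omega>\<in>I.
              (complex_of_real (sff X N \<omega> 2 2 q) + \<i> * complex_of_real (sff X N \<omega> 1 2 q))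
                 * complex_of_real (torsion N \<omega> \<sigma> 1 q)
            - (complex_of_real (sff X N \<omega> 2 1 q) + \<i> * complex_of_real (sff X N \<omega> 1 1 q))
                 * complex_of_real (torsion N \<omega> \<sigma> 2 q))"
    (is "_ = _ + ?torsion_terms")
proof -
  define W where "W = areaW X q"
  define L where "L i j = sff X N \<sigma> i j q" for i j
  define dL where "dL k i j = pd k (sff X N \<sigma> i j) q" for k i j
  define dW where "dW k = pd k (areaW X) q" for k
  define T1 where
    "T1 = (\<Sum>\<omega>\<in>I. sff X N \<omega> 2 2 q * torsion N \<omega> \<sigma> 1 q - sff X N \<omega> 2 1 q * torsion N \<omega> \<sigma> 2 q)"
  define T2 where
    "T2 = (\<Sum>\<omega>\<in>I. sff X N \<omega> 1 2 q * torsion N \<omega> \<sigma> 1 q - sff X N \<omega> 1 1 q * torsion N \<omega> \<sigma> 2 q)"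
  have W: "W > 0"
    using area_pos[OF assms(2)] by (simp add: W_def)
  have torsion_terms: "?torsion_terms = complex_of_real T1 + \<i> * complex_of_real T2"
    by (simp add: complex_eq_iff Re_sum Im_sum T1_def T2_def)
  have C1: "dL 2 1 2 = - (L 1 1 + L 2 2) * dW 1 / (2 * W) + T1 + dL 1 2 2"
    unfolding dL_def L_def dW_def W_def T1_def by (rule codazzi_conformal_1[OF assms, unfolded diff_eq_eq])
  have C2: "dL 2 1 1 = (L 1 1 + L 2 2) * dW 2 / (2 * W) + T2 + dL 1 1 2"
    unfolding dL_def L_def dW_def W_def T2_def by (rule codazzi_conformal_2[OF assms, unfolded diff_eq_eq])
  have dH: "pd k (\<lambda>x. complex_of_real (meanH X N \<sigma> x)) q
      = complex_of_real (((dL k 1 1 + dL k 2 2) * W - (L 1 1 + L 2 2) * dW k) / (2 * W\<^sup>2))" for k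
    unfolding dL_def L_def dW_def W_def
    by (intro pd_eqI has_partial_derivative_of_real meanH_has_partial_derivative assms)
  have dhopf: "pd k (hopf X N \<sigma>) q
      = complex_of_real (dL k 1 1 - dL k 2 2) - 2 * \<i> * complex_of_real (dL k 1 2)" for k
    unfolding dL_def by (rule pd_hopf[OF assms])
  show ?thesis
    unfolding torsion_terms dwbar_def dw_def pu_pv_eq_pd dH dhopf W_def[symmetric] C1 C2
    using W by (simp add: complex_eq_iff field_simps power2_eq_square)
qed

end

theorem mainTheorem7:
  fixes X :: "real \<times> real \<Rightarrow> real^'n"
    and N :: "nat \<Rightarrow> real \<times> real \<Rightarrow> real^'n"
  assumes n3: "CARD('n) \<ge> 3"
    and X_C3: "Ck 3 X (ball (0,0) 1)"
    and conf1: "\<And>p. p \<in> ball (0,0) 1 \<Longrightarrow> pv X p \<bullet> pv X p = areaW X p"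
    and conf2: "\<And>p. p \<in> ball (0,0) 1 \<Longrightarrow> pu X p \<bullet> pv X p = 0"
    and immersion: "\<And>p. p \<in> ball (0,0) 1 \<Longrightarrow> areaW X p > 0"
    and N_C2: "\<And>\<sigma>. \<sigma> \<in> {1..CARD('n) - 2} \<Longrightarrow> Ck 2 (N \<sigma>) (ball (0,0) 1)"
    and N_normal: "\<And>\<sigma> p. \<sigma> \<in> {1..CARD('n) - 2} \<Longrightarrow> p \<in> ball (0,0) 1 \<Longrightarrow>
                      N \<sigma> p \<bullet> pu X p = 0 \<and> N \<sigma> p \<bullet> pv X p = 0"
    and N_orthonormal: "\<And>\<sigma> \<omega> p. \<sigma> \<in> {1..CARD('n) - 2} \<Longrightarrow> \<omega> \<in> {1..CARD('n) - 2} \<Longrightarrow>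
                      p \<in> ball (0,0) 1 \<Longrightarrow> N \<sigma> p \<bullet> N \<omega> p = (if \<sigma> = \<omega> then 1 else 0)"
    and \<sigma>: "\<sigma> \<in> {1..CARD('n) - 2}"
    and p: "p \<in> ball (0,0) 1"
  shows "dwbar (hopf X N \<sigma>) p =
           2 * dw (\<lambda>q. complex_of_real (meanH X N \<sigma> q)) p * complex_of_real (areaW X p)
         + (\<Sum>\<omega>=1..CARD('n) - 2.
              (complex_of_real (sff X N \<omega> 2 2 p) + \<i> * complex_of_real (sff X N \<omega> 1 2 p))
                 * complex_of_real (torsion N \<omega> \<sigma> 1 p)
            - (complex_of_real (sff X N \<omega> 2 1 p) + \<i> * complex_of_real (sff X N \<omega> 1 1 p))
                 * complex_of_real (torsion N \<omega> \<sigma> 2 p))"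
proof -
  interpret F: conformal_frame X N "ball (0,0) 1" "{1..CARD('n) - 2}"
  proof
    show "pd j X q \<bullet> pd k X q = (if j = k then areaW X q else 0)"
      if "j \<in> {1,2}" "k \<in> {1,2}" "q \<in> ball (0,0) 1" for j k q
      using that conf1 conf2 by (auto simp: pd_def areaW_def inner_commute)
    show "Ck 1 (N \<sigma>) (ball (0,0) 1)" if "\<sigma> \<in> {1..CARD('n) - 2}" for \<sigma>
      using Ck_mono[of 1 2] N_C2[OF that] by simp
    show "N \<sigma> q \<bullet> pd j X q = 0"
      if "\<sigma> \<in> {1..CARD('n) - 2}" "j \<in> {1,2}" "q \<in> ball (0,0) 1" for \<sigma> j q
      using that N_normal by (auto simp: pd_def)
  qed (use X_C3 immersion N_orthonormal in auto)
  show ?thesis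
    using F.dwbar_hopf[OF \<sigma> p] .
qed

end
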